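(* Each of the axioms (A1), (A3), (A4) is independent of the other two in the presence of (A2). Specifically: (a) The rule $C_\lambda(R)=\sum_i\frac{\lambda_i}{\bar\lambda}R_i$ satisfies (A1), (A2), (A3) but not (A4). (b) The rule defined by $C_\lambda(R)=q^{-1}\!\left(\frac{\sum_i\lambda_iq(R_i)}{\sum_i\lambda_i}\right)$ when $n\in\{1,2\}$ and $C_\lambda(R)=\frac{\sum_i\lambda_iR_i}{\sum_i\lambda_i}$ when $n\ge3$ satisfies (A1), (A2), (A4) but not (A3). (c) Fix $\eta>0$; with $w_i=\lambda_i/\bar\lambda$ and Shannon entropy $H(w)=-\sum_iw_i\log w_i$ (natural logarithm), the rule $C_\lambda(R)=q^{-1}\!\left(\sum_iw_iq(R_i)+\eta H(w)\right)$ satisfies (A2), (A3), (A4) but not (A1).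
   Context: Let $q(r)=10^{r/400}$, $q^{-1}(s)=400\log_{10}s$ ($s>0$), and $E(a,b)=1/(1+10^{(b-a)/400})$. A combined rating rule assigns to every $n\ge1$ and every $\lambda\in(0,\infty)^n$ a function $C_\lambda:\mathbb{R}^n\to\mathbb{R}$. Write $\bar\lambda=\sum_i\lambda_i$; for nonempty $B\subseteq\{1,\dots,n\}$, $R_B=(R_i)_{i\in B}$, $\lambda_B=(\lambda_i)_{i\in B}$ (inherited increasing order), $\bar\lambda_B=\sum_{i\in B}\lambda_i$; $\mathbf 1$ is the all-ones vector. (A1) Same-scale normalization: $C_\lambda(r\mathbf 1)=r$ for all $\lambda$ and $r\in\mathbb{R}$. (A2) Regularity and monotonicity: for each $n$, $(\lambda,R)\mapsto C_\lambda(R)$ is continuous on $(0,\infty)^n\times\mathbb{R}^n$; for each fixed $\lambda$, $C_\lambda$ is continuously differentiable with $\partial_iC_\lambda(R)>0$ for all $i$, $R$. (A3) Recursive consistency: for every ordered partition $(B_1,\dots,B_m)$ of $\{1,\dots,n\}$ into nonempty blocks, $C_\lambda(R)=C_{(\bar\lambda_{B_1},\dots,\bar\lambda_{B_m})}\big(C_{\lambda_{B_1}}(R_{B_1}),\dots,C_{\lambda_{B_m}}(R_{B_m})\big)$. (A4) Marginal Elo-strength consistency: for all $x,y\in\mathbb{R}$, $\partial_xC_{(1,1)}(x,y)/\partial_yC_{(1,1)}(x,y)=E(x,y)/(1-E(x,y))=10^{(x-y)/400}$. *)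

theory Defs
  imports "HOL-Analysis.Analysis"
begin

definition q :: "real \<Rightarrow> real" where
  "q r = 10 powr (r / 400)"

definition qinv :: "real \<Rightarrow> real" where
  "qinv s = 400 * log 10 s"

definition E :: "real \<Rightarrow> real \<Rightarrow> real" where
  "E a b = 1 / (1 + 10 powr ((b - a) / 400))"

text \<open>A combined rating rule: for weights lam (a list of length n) and ratings R
  (a list of length n) it returns C lam R. Only arguments with n \<ge> 1,
  length lam = length R = n and all weights positive are relevant.\<close>
type_synonym rule = "real list \<Rightarrow> real list \<Rightarrow> real"

definition admissible :: "nat \<Rightarrow> real list \<Rightarrow> bool" where
  "admissible n lam \<longleftrightarrow> n \<ge> 1 \<and> length lam = n \<and> (\<forall>x\<in>set lam. x > 0)"

definition close :: "real \<Rightarrow> real list \<Rightarrow> real list \<Rightarrow> bool" where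
  "close d xs ys \<longleftrightarrow> (\<forall>i<length xs. \<bar>xs ! i - ys ! i\<bar> < d)"

definition pderiv_rule :: "rule \<Rightarrow> real list \<Rightarrow> real list \<Rightarrow> nat \<Rightarrow> real" where
  "pderiv_rule C lam R i = deriv (\<lambda>t. C lam (R[i := t])) (R ! i)"

definition A1 :: "rule \<Rightarrow> bool" where
  "A1 C \<longleftrightarrow> (\<forall>n lam r. admissible n lam \<longrightarrow> C lam (replicate n r) = r)"

text \<open>(A2): joint continuity of (lam,R) \<mapsto> C lam R on (0,\<infinity>)^n \<times> \<real>^n (product topology,
  written in epsilon-delta form with the max-norm), and for fixed lam continuous
  differentiability (existence and continuity of all partial derivatives) with
  positive partial derivatives.\<close>
definition A2 :: "rule \<Rightarrow> bool" where
  "A2 C \<longleftrightarrow>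
     (\<forall>n lam R. admissible n lam \<and> length R = n \<longrightarrow>
        (\<forall>e>0. \<exists>d>0. \<forall>lam' R'. admissible n lam' \<and> length R' = n \<and>
             close d lam lam' \<and> close d R R' \<longrightarrow> \<bar>C lam' R' - C lam R\<bar> < e))
   \<and> (\<forall>n lam R i. admissible n lam \<and> length R = n \<and> i < n \<longrightarrow>
        (\<lambda>t. C lam (R[i := t])) differentiable (at (R ! i))
        \<and> pderiv_rule C lam R i > 0
        \<and> (\<forall>e>0. \<exists>d>0. \<forall>R'. length R' = n \<and> close d R R' \<longrightarrow>
               \<bar>pderiv_rule C lam R' i - pderiv_rule C lam R i\<bar> < e))"

definition ordered_partition :: "nat \<Rightarrow> nat list list \<Rightarrow> bool" where
  "ordered_partition n Bs \<longleftrightarrow>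
     (\<forall>B\<in>set Bs. B \<noteq> [] \<and> sorted_wrt (<) B)
     \<and> distinct (concat Bs) \<and> set (concat Bs) = {..<n}"

definition A3 :: "rule \<Rightarrow> bool" where
  "A3 C \<longleftrightarrow> (\<forall>n lam R Bs. admissible n lam \<and> length R = n \<and> ordered_partition n Bs \<longrightarrow>
      C lam R =
      C (map (\<lambda>B. sum_list (map ((!) lam) B)) Bs)
        (map (\<lambda>B. C (map ((!) lam) B) (map ((!) R) B)) Bs))"

definition A4 :: "rule \<Rightarrow> bool" where
  "A4 C \<longleftrightarrow> (\<forall>x y::real. \<exists>a b.
      ((\<lambda>t. C [1, 1] [t, y]) has_real_derivative a) (at x)
    \<and> ((\<lambda>s. C [1, 1] [x, s]) has_real_derivative b) (at y)
    \<and> a / b = E x y / (1 - E x y)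
    \<and> E x y / (1 - E x y) = 10 powr ((x - y) / 400))"

definition lin_rule :: rule where
  "lin_rule lam R = (\<Sum>i<length R. lam ! i / sum_list lam * R ! i)"

definition mixed_rule :: rule where
  "mixed_rule lam R =
     (if length R \<in> {1, 2}
      then qinv ((\<Sum>i<length R. lam ! i * q (R ! i)) / sum_list lam)
      else (\<Sum>i<length R. lam ! i * R ! i) / sum_list lam)"

definition entropy_rule :: "real \<Rightarrow> rule" where
  "entropy_rule \<eta> lam R =
     (let w = (\<lambda>i. lam ! i / sum_list lam);
          H = - (\<Sum>i<length R. w i * ln (w i))
      in qinv ((\<Sum>i<length R. w i * q (R ! i)) + \<eta> * H))"

end

theory Submission
  imports Defs
begin

text \<open>
  Write \<open>S\<close> for the total weight and \<open>w\<^sub>i = \<lambda>\<^sub>i / S\<close>.  A rule is recursively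
  consistent as soon as some quantity \<open>\<Phi>(S, C)\<close> of the total weight and the combined
  rating is additive over players and determines \<open>C\<close>.  For the weighted arithmetic mean
  \<open>\<Phi>(S, C) = S C\<close>; its partial derivatives are the weights, whose ratio for two equal
  weights is 1 rather than \<open>10 powr ((x - y) / 400)\<close>.

  For the entropy-regularised rule \<open>q C = \<Sum>\<^sub>i w\<^sub>i (q R\<^sub>i - \<eta> ln w\<^sub>i)\<close>, hence
  \<open>S (q C - \<eta> ln S) = \<Sum>\<^sub>i \<lambda>\<^sub>i (q R\<^sub>i - \<eta> ln \<lambda>\<^sub>i)\<close> is additive.  Since
  \<open>q' = q ln 10 / 400\<close>, the partial derivatives are \<open>w\<^sub>i q R\<^sub>i / q C\<close>, whose ratio for two
  equal weights is \<open>q x / q y = 10 powr ((x - y) / 400)\<close>.  At equal ratings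
  \<open>q C = q r + \<eta> H(w) > q r\<close>, so normalisation fails.

  The mixed rule is the case \<open>\<eta> = 0\<close> for one or two players and the arithmetic mean for
  more.  (A1), (A2) and (A4) only relate arguments of one length, so it inherits them; but
  splitting the ratings \<open>(0, 0, 400)\<close> into the blocks \<open>{0, 1}, {2}\<close> yields
  \<open>400 * log 10 4\<close> instead of \<open>400 / 3\<close>.
\<close>

section \<open>Elo scale\<close>

lemma q_pos: "0 < q r"
  by (simp add: q_def)

lemma q_qinv: "0 < s \<Longrightarrow> q (qinv s) = s"
  by (simp add: q_def qinv_def)

lemma qinv_q: "qinv (q r) = r"
  by (simp add: q_def qinv_def log_powr)

lemma q_eq_iff: "q x = q y \<longleftrightarrow> x = y"
  by (metis qinv_q)

lemma q_divide: "q x / q y = 10 powr ((x - y) / 400)"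
  by (simp add: q_def powr_diff[symmetric] diff_divide_distrib)

lemma E_odds: "E x y / (1 - E x y) = 10 powr ((x - y) / 400)"
proof -
  have "0 < 1 + 10 powr ((y - x) / 400)"
    by (simp add: add_pos_pos)
  then have "E x y / (1 - E x y) = 1 / 10 powr ((y - x) / 400)"
    unfolding E_def by (simp add: field_simps)
  also have "\<dots> = 10 powr ((x - y) / 400)"
    by (simp add: powr_minus_divide[symmetric] minus_divide_left)
  finally show ?thesis .
qed

lemma DERIV_q: "(q has_real_derivative q r * ln 10 / 400) (at r)"
  unfolding q_def[abs_def] powr_def by (auto intro!: derivative_eq_intros)

lemma DERIV_qinv: "0 < s \<Longrightarrow> (qinv has_real_derivative 400 / (ln 10 * s)) (at s)"
  unfolding qinv_def[abs_def] log_def by (auto intro!: derivative_eq_intros)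

lemma tendsto_q: "(f \<longlongrightarrow> a) F \<Longrightarrow> ((\<lambda>x. q (f x)) \<longlongrightarrow> q a) F"
  unfolding q_def by (intro tendsto_intros) simp_all

lemma tendsto_qinv: "(f \<longlongrightarrow> a) F \<Longrightarrow> 0 < a \<Longrightarrow> ((\<lambda>x. qinv (f x)) \<longlongrightarrow> qinv a) F"
  unfolding qinv_def log_def by (intro tendsto_intros) auto

section \<open>Weights and ordered partitions\<close>

lemma sum_list_map_conv_sum_nth: "sum_list (map f xs) = (\<Sum>k<length xs. f (xs ! k))"
  by (simp add: sum_list_sum_nth atLeast0LessThan)

lemma sum_nth_list_update:
  assumes "i < length R"
  shows "(\<Sum>k<length R. f k (R[i := t] ! k)) = f i t + (\<Sum>k\<in>{..<length R} - {i}. f k (R ! k))"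
proof -
  have "(\<Sum>k<length R. f k (R[i := t] ! k)) = f i t + (\<Sum>k\<in>{..<length R} - {i}. f k (R[i := t] ! k))"
    using assms by (subst sum.remove[of _ i]) auto
  also have "(\<Sum>k\<in>{..<length R} - {i}. f k (R[i := t] ! k)) = (\<Sum>k\<in>{..<length R} - {i}. f k (R ! k))"
    by (intro sum.cong) auto
  finally show ?thesis .
qed

lemma admissibleD:
  assumes "admissible n lam"
  shows "length lam = n" "0 < n" "\<And>k. k < n \<Longrightarrow> 0 < lam ! k"
  using assms by (auto simp: admissible_def)

lemma sum_list_admissible: "admissible n lam \<Longrightarrow> sum_list lam = (\<Sum>k<n. lam ! k)"
  using sum_list_map_conv_sum_nth[of "\<lambda>x. x" lam] by (simp add: admissibleD)

lemma sum_list_pos: "admissible n lam \<Longrightarrow> 0 < sum_list lam"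
  unfolding sum_list_admissible by (rule sum_pos) (auto simp: admissibleD lessThan_empty_iff)

lemma nth_le_sum_list: "admissible n lam \<Longrightarrow> k < n \<Longrightarrow> lam ! k \<le> sum_list lam"
  by (rule member_le_sum_list) (auto simp: admissible_def)

definition weight :: "real list \<Rightarrow> nat \<Rightarrow> real" where
  "weight lam k = lam ! k / sum_list lam"

lemma weight_pos: "admissible n lam \<Longrightarrow> k < n \<Longrightarrow> 0 < weight lam k"
  by (simp add: weight_def admissibleD sum_list_pos)

lemma weight_le_1: "admissible n lam \<Longrightarrow> k < n \<Longrightarrow> weight lam k \<le> 1"
  by (simp add: weight_def sum_list_pos nth_le_sum_list)

lemma sum_weight: "admissible n lam \<Longrightarrow> (\<Sum>k<n. weight lam k) = 1"
  using sum_list_pos[of n lam]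
  by (simp add: weight_def sum_divide_distrib[symmetric] sum_list_admissible)

lemma sum_ordered_partition:
  assumes "ordered_partition n Bs"
  shows "sum_list (map (\<lambda>B. sum_list (map f B)) Bs) = (\<Sum>k<n. f k)"
proof -
  have "sum_list (map (\<lambda>B. sum_list (map f B)) Bs) = sum_list (map f (concat Bs))"
    by (induct Bs) auto
  also have "\<dots> = (\<Sum>k<n. f k)"
    using assms sum_list_distinct_conv_sum_set[of "concat Bs" f]
    by (simp add: ordered_partition_def)
  finally show ?thesis .
qed

lemma admissible_block:
  assumes "ordered_partition n Bs" "admissible n lam" "B \<in> set Bs"
  shows "admissible (length B) (map ((!) lam) B)"
proof -
  have "B \<noteq> []" "set B \<subseteq> {..<n}"
    using assms(1,3) by (auto simp: ordered_partition_def)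
  then show ?thesis
    using admissibleD[OF assms(2)] by (auto simp: admissible_def Suc_le_eq)
qed

lemma admissible_block_sums:
  assumes "ordered_partition n Bs" "admissible n lam"
  shows "admissible (length Bs) (map (\<lambda>B. sum_list (map ((!) lam) B)) Bs)"
proof -
  have "Bs \<noteq> []"
    using assms admissibleD(2)[OF assms(2)] by (auto simp: ordered_partition_def)
  then show ?thesis
    using sum_list_pos[OF admissible_block[OF assms]]
    by (auto simp: admissible_def Suc_le_eq)
qed

section \<open>Sufficient conditions for the axioms\<close>

lemma A3I:
  fixes C :: rule and \<Phi> :: "real \<Rightarrow> real \<Rightarrow> real"
  assumes inj: "\<And>s c c'. 0 < s \<Longrightarrow> \<Phi> s c = \<Phi> s c' \<Longrightarrow> c = c'"
    and additive: "\<And>n lam R. admissible n lam \<Longrightarrow> length R = n \<Longrightarrow>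
      \<Phi> (sum_list lam) (C lam R) = (\<Sum>k<n. \<Phi> (lam ! k) (R ! k))"
  shows "A3 C"
  unfolding A3_def
proof (intro allI impI, elim conjE)
  fix n lam Bs and R :: "real list"
  assume adm: "admissible n lam" and len: "length R = n" and P: "ordered_partition n Bs"
  define lamB where "lamB B = map ((!) lam) B" for B :: "nat list"
  define RB where "RB B = map ((!) R) B" for B :: "nat list"
  define \<Lambda> where "\<Lambda> = map (\<lambda>B. sum_list (lamB B)) Bs"
  define \<rho> where "\<rho> = map (\<lambda>B. C (lamB B) (RB B)) Bs"
  have adm\<Lambda>: "admissible (length Bs) \<Lambda>"
    unfolding \<Lambda>_def lamB_def by (rule admissible_block_sums[OF P adm])
  have sum\<Lambda>: "sum_list \<Lambda> = sum_list lam"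
    using sum_ordered_partition[OF P, of "(!) lam"]
    by (simp add: \<Lambda>_def lamB_def sum_list_admissible[OF adm])
  have block: "\<Phi> (sum_list (lamB B)) (C (lamB B) (RB B)) = sum_list (map (\<lambda>k. \<Phi> (lam ! k) (R ! k)) B)"
    if "B \<in> set Bs" for B
    using additive[OF admissible_block[OF P adm that]]
    by (simp add: lamB_def RB_def sum_list_map_conv_sum_nth)
  have "\<Phi> (sum_list \<Lambda>) (C \<Lambda> \<rho>) = (\<Sum>j<length Bs. \<Phi> (\<Lambda> ! j) (\<rho> ! j))"
    using additive[OF adm\<Lambda>] by (simp add: \<rho>_def)
  also have "\<dots> = sum_list (map (\<lambda>B. \<Phi> (sum_list (lamB B)) (C (lamB B) (RB B))) Bs)"
    by (simp add: \<Lambda>_def \<rho>_def sum_list_map_conv_sum_nth)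
  also have "\<dots> = sum_list (map (\<lambda>B. sum_list (map (\<lambda>k. \<Phi> (lam ! k) (R ! k)) B)) Bs)"
    using block by (intro arg_cong[where f = sum_list] map_cong) auto
  also have "\<dots> = \<Phi> (sum_list lam) (C lam R)"
    using sum_ordered_partition[OF P] additive[OF adm len] by simp
  finally have "\<Phi> (sum_list lam) (C \<Lambda> \<rho>) = \<Phi> (sum_list lam) (C lam R)"
    by (simp add: sum\<Lambda>)
  then show "C lam R = C \<Lambda> \<rho>"
    using inj[OF sum_list_pos[OF adm]] by metis
qed

lemma close_mono: "close d xs ys \<Longrightarrow> d \<le> d' \<Longrightarrow> close d' xs ys"
  unfolding close_def by force

definition admissible_nhds :: "nat \<Rightarrow> real list \<Rightarrow> real list \<Rightarrow> (real list \<times> real list) filter" where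
  "admissible_nhds n lam R = (INF d\<in>{0<..}. principal
     {(lam', R'). admissible n lam' \<and> length R' = n \<and> close d lam lam' \<and> close d R R'})"

lemma eventually_admissible_nhds:
  "eventually P (admissible_nhds n lam R) \<longleftrightarrow> (\<exists>d>0. \<forall>lam' R'.
     admissible n lam' \<and> length R' = n \<and> close d lam lam' \<and> close d R R' \<longrightarrow> P (lam', R'))"
  unfolding admissible_nhds_def
  apply (subst eventually_INF_base)
  subgoal by simp
  subgoal for a b by (rule bexI[of _ "min a b"]) (auto intro: close_mono)
  by (auto simp: eventually_principal)

lemma tendsto_admissible_nhds_iff:
  fixes f :: "real list \<times> real list \<Rightarrow> real"
  shows "(f \<longlongrightarrow> l) (admissible_nhds n lam R) \<longleftrightarrow> (\<forall>e>0. \<exists>d>0. \<forall>lam' R'.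
     admissible n lam' \<and> length R' = n \<and> close d lam lam' \<and> close d R R' \<longrightarrow> \<bar>f (lam', R') - l\<bar> < e)"
  unfolding tendsto_iff eventually_admissible_nhds dist_real_def ..

lemma eventually_admissible_nhds_admissible:
  "eventually (\<lambda>x. admissible n (fst x) \<and> length (snd x) = n) (admissible_nhds n lam R)"
  unfolding eventually_admissible_nhds by (auto intro: exI[of _ 1])

lemma tendsto_nth_fst: "i < length lam \<Longrightarrow> ((\<lambda>x. fst x ! i) \<longlongrightarrow> lam ! i) (admissible_nhds n lam R)"
  unfolding tendsto_admissible_nhds_iff close_def by (auto simp: abs_minus_commute)

lemma tendsto_nth_snd: "i < length R \<Longrightarrow> ((\<lambda>x. snd x ! i) \<longlongrightarrow> R ! i) (admissible_nhds n lam R)"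
  unfolding tendsto_admissible_nhds_iff close_def by (auto simp: abs_minus_commute)

lemma tendsto_weight:
  assumes "admissible n lam" "i < n"
  shows "((\<lambda>x. weight (fst x) i) \<longlongrightarrow> weight lam i) (admissible_nhds n lam R)"
proof -
  have "((\<lambda>x. fst x ! i / (\<Sum>k<n. fst x ! k)) \<longlongrightarrow> weight lam i) (admissible_nhds n lam R)"
    unfolding weight_def sum_list_admissible[OF assms(1)] using assms sum_list_pos[OF assms(1)]
    by (intro tendsto_intros tendsto_nth_fst) (auto simp: admissibleD sum_list_admissible)
  moreover have "eventually (\<lambda>x. fst x ! i / (\<Sum>k<n. fst x ! k) = weight (fst x) i) (admissible_nhds n lam R)"
    using eventually_admissible_nhds_admissible
    by eventually_elim (auto simp: weight_def dest!: sum_list_admissible)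
  ultimately show ?thesis
    by (rule Lim_transform_eventually)
qed

definition A2_arity :: "nat \<Rightarrow> rule \<Rightarrow> bool" where
  "A2_arity n C \<longleftrightarrow>
     (\<forall>lam R. admissible n lam \<and> length R = n \<longrightarrow>
        (\<forall>e>0. \<exists>d>0. \<forall>lam' R'. admissible n lam' \<and> length R' = n \<and>
             close d lam lam' \<and> close d R R' \<longrightarrow> \<bar>C lam' R' - C lam R\<bar> < e))
   \<and> (\<forall>lam R i. admissible n lam \<and> length R = n \<and> i < n \<longrightarrow>
        (\<lambda>t. C lam (R[i := t])) differentiable (at (R ! i))
        \<and> pderiv_rule C lam R i > 0
        \<and> (\<forall>e>0. \<exists>d>0. \<forall>R'. length R' = n \<and> close d R R' \<longrightarrow>
               \<bar>pderiv_rule C lam R' i - pderiv_rule C lam R i\<bar> < e))"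

lemma A2_iff_A2_arity: "A2 C \<longleftrightarrow> (\<forall>n. A2_arity n C)"
  unfolding A2_def A2_arity_def by blast

lemma A2_arity_cong:
  assumes "\<And>lam R. length R = n \<Longrightarrow> C lam R = C' lam R"
  shows "A2_arity n C \<longleftrightarrow> A2_arity n C'"
proof -
  have slice: "(\<lambda>t. C lam (R[i := t])) = (\<lambda>t. C' lam (R[i := t]))" if "length R = n" for lam R i
    using assms that by simp
  then have "pderiv_rule C lam R i = pderiv_rule C' lam R i" if "length R = n" for lam R i
    using that by (simp add: pderiv_rule_def)
  with slice show ?thesis
    unfolding A2_arity_def using assms by (auto cong: conj_cong)
qed

lemma A2_arityI:
  fixes C :: rule and D :: "real list \<Rightarrow> real list \<Rightarrow> nat \<Rightarrow> real"
  assumes cont: "\<And>lam R. admissible n lam \<Longrightarrow> length R = n \<Longrightarrow>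
      ((\<lambda>x. C (fst x) (snd x)) \<longlongrightarrow> C lam R) (admissible_nhds n lam R)"
    and deriv: "\<And>lam R i. admissible n lam \<Longrightarrow> length R = n \<Longrightarrow> i < n \<Longrightarrow>
      ((\<lambda>t. C lam (R[i := t])) has_real_derivative D lam R i) (at (R ! i))"
    and deriv_pos: "\<And>lam R i. admissible n lam \<Longrightarrow> length R = n \<Longrightarrow> i < n \<Longrightarrow> 0 < D lam R i"
    and deriv_cont: "\<And>lam R i. admissible n lam \<Longrightarrow> length R = n \<Longrightarrow> i < n \<Longrightarrow>
      ((\<lambda>x. D (fst x) (snd x) i) \<longlongrightarrow> D lam R i) (admissible_nhds n lam R)"
  shows "A2_arity n C"
proof -
  have pderiv: "pderiv_rule C lam R i = D lam R i" if "admissible n lam" "length R = n" "i < n" for lam R i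
    unfolding pderiv_rule_def using deriv[OF that] by (rule DERIV_imp_deriv)
  show ?thesis
    unfolding A2_arity_def
  proof (intro conjI allI impI; elim conjE)
    fix lam and e :: real and R :: "real list"
    assume "admissible n lam" "length R = n" "0 < e"
    then show "\<exists>d>0. \<forall>lam' R'. admissible n lam' \<and> length R' = n \<and>
        close d lam lam' \<and> close d R R' \<longrightarrow> \<bar>C lam' R' - C lam R\<bar> < e"
      using cont unfolding tendsto_admissible_nhds_iff by simp
  next
    fix lam i and R :: "real list"
    assume "admissible n lam" "length R = n" "i < n"
    then show "(\<lambda>t. C lam (R[i := t])) differentiable (at (R ! i))"
      using deriv real_differentiable_def by blast
  next
    fix lam i and R :: "real list"
    assume "admissible n lam" "length R = n" "i < n"
    then show "0 < pderiv_rule C lam R i"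
      using deriv_pos by (simp add: pderiv)
  next
    fix lam i and e :: real and R :: "real list"
    assume adm: "admissible n lam" and len: "length R = n" and i: "i < n" and "0 < e"
    then obtain d where "0 < d" and d: "\<And>R'. length R' = n \<Longrightarrow> close d lam lam \<Longrightarrow> close d R R' \<Longrightarrow>
        \<bar>D lam R' i - D lam R i\<bar> < e"
      using deriv_cont[OF adm len i] unfolding tendsto_admissible_nhds_iff by fastforce
    moreover have "close d lam lam"
      using \<open>0 < d\<close> by (simp add: close_def)
    ultimately show "\<exists>d>0. \<forall>R'. length R' = n \<and> close d R R' \<longrightarrow>
        \<bar>pderiv_rule C lam R' i - pderiv_rule C lam R i\<bar> < e"
      using adm len i by (auto simp: pderiv)
  qed
qed

lemma A4_cong: "(\<And>x y. C [1, 1] [x, y] = C' [1, 1] [x, y]) \<Longrightarrow> A4 C \<longleftrightarrow> A4 C'"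
  by (simp add: A4_def)

section \<open>The weighted arithmetic mean\<close>

lemma lin_rule_eq: "lin_rule lam R = (\<Sum>k<length R. weight lam k * R ! k)"
  by (simp add: lin_rule_def weight_def)

lemma lin_rule_A1: "A1 lin_rule"
  unfolding A1_def lin_rule_eq by (simp add: sum_distrib_right[symmetric] sum_weight)

lemma lin_rule_A3: "A3 lin_rule"
proof (rule A3I[where \<Phi> = "\<lambda>s c. s * c"])
  fix n lam and R :: "real list"
  assume "admissible n lam" "length R = n"
  then show "sum_list lam * lin_rule lam R = (\<Sum>k<n. lam ! k * R ! k)"
    using sum_list_pos[of n lam] by (simp add: lin_rule_eq weight_def sum_distrib_left)
qed simp

lemma lin_rule_partial_deriv:
  assumes "i < length R"
  shows "((\<lambda>t. lin_rule lam (R[i := t])) has_real_derivative weight lam i) (at x)"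
proof -
  define K where "K = (\<Sum>k\<in>{..<length R} - {i}. weight lam k * R ! k)"
  have "lin_rule lam (R[i := t]) = weight lam i * t + K" for t
    unfolding lin_rule_eq K_def using sum_nth_list_update[OF assms, of "\<lambda>k r. weight lam k * r"] by simp
  moreover have "((\<lambda>t. weight lam i * t + K) has_real_derivative weight lam i) (at x)"
    by (auto intro!: derivative_eq_intros)
  ultimately show ?thesis
    by simp
qed

lemma lin_rule_A2: "A2 lin_rule"
  unfolding A2_iff_A2_arity
proof
  fix n
  show "A2_arity n lin_rule"
  proof (rule A2_arityI[where D = "\<lambda>lam R i. weight lam i"])
    fix lam and R :: "real list"
    assume adm: "admissible n lam" and len: "length R = n"
    have "((\<lambda>x. \<Sum>k<n. weight (fst x) k * snd x ! k) \<longlongrightarrow> lin_rule lam R) (admissible_nhds n lam R)"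
      unfolding lin_rule_eq len using adm len by (intro tendsto_intros tendsto_weight tendsto_nth_snd) auto
    moreover have "eventually (\<lambda>x. (\<Sum>k<n. weight (fst x) k * snd x ! k) = lin_rule (fst x) (snd x))
        (admissible_nhds n lam R)"
      using eventually_admissible_nhds_admissible by eventually_elim (simp add: lin_rule_eq)
    ultimately show "((\<lambda>x. lin_rule (fst x) (snd x)) \<longlongrightarrow> lin_rule lam R) (admissible_nhds n lam R)"
      by (rule Lim_transform_eventually)
  qed (auto intro: lin_rule_partial_deriv weight_pos tendsto_weight)
qed

lemma lin_rule_not_A4: "\<not> A4 lin_rule"
proof
  assume "A4 lin_rule"
  then obtain a b where a: "((\<lambda>t. lin_rule [1, 1] [t, 0]) has_real_derivative a) (at 400)"
    and b: "((\<lambda>s. lin_rule [1, 1] [400, s]) has_real_derivative b) (at 0)"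
    and odds: "a / b = E 400 0 / (1 - E 400 0)"
    unfolding A4_def by blast
  have "((\<lambda>t. lin_rule [1, 1] [t, 0]) has_real_derivative 1 / 2) (at 400)"
    using lin_rule_partial_deriv[of 0 "[400, 0]" "[1, 1]"] by (simp add: weight_def)
  with a have "a = 1 / 2"
    by (rule DERIV_unique)
  have "((\<lambda>s. lin_rule [1, 1] [400, s]) has_real_derivative 1 / 2) (at 0)"
    using lin_rule_partial_deriv[of 1 "[400, 0]" "[1, 1]"] by (simp add: weight_def)
  with b have "b = 1 / 2"
    by (rule DERIV_unique)
  with \<open>a = 1 / 2\<close> have "a / b = 1"
    by simp
  with odds show False
    by (simp add: E_odds)
qed

section \<open>The entropy-regularised rule\<close>

definition entropy_strength :: "real \<Rightarrow> real list \<Rightarrow> real list \<Rightarrow> real" where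
  "entropy_strength \<eta> lam R = (\<Sum>k<length R. weight lam k * (q (R ! k) - \<eta> * ln (weight lam k)))"

lemma entropy_rule_eq: "entropy_rule \<eta> lam R = qinv (entropy_strength \<eta> lam R)"
  by (simp add: entropy_rule_def entropy_strength_def weight_def Let_def algebra_simps
      sum.distrib sum_subtractf sum_distrib_left)

lemma entropy_strength_pos:
  assumes "0 \<le> \<eta>" "admissible n lam" "length R = n"
  shows "0 < entropy_strength \<eta> lam R"
  unfolding entropy_strength_def
proof (rule sum_pos)
  show "{..<length R} \<noteq> {}"
    using assms by (auto simp: admissibleD lessThan_empty_iff)
  fix k assume "k \<in> {..<length R}"
  then have w: "0 < weight lam k" "weight lam k \<le> 1"
    using assms weight_pos weight_le_1 by auto
  then have "0 \<le> - \<eta> * ln (weight lam k)"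
    using assms(1) by (simp add: mult_nonneg_nonpos)
  then show "0 < weight lam k * (q (R ! k) - \<eta> * ln (weight lam k))"
    using w q_pos[of "R ! k"] by simp
qed simp

lemma q_entropy_rule:
  "0 \<le> \<eta> \<Longrightarrow> admissible n lam \<Longrightarrow> length R = n \<Longrightarrow> q (entropy_rule \<eta> lam R) = entropy_strength \<eta> lam R"
  by (simp add: entropy_rule_eq q_qinv entropy_strength_pos)

lemma entropy_rule_zero_A1: "A1 (entropy_rule 0)"
  unfolding A1_def entropy_rule_eq entropy_strength_def
  by (simp add: sum_distrib_right[symmetric] sum_weight qinv_q)

lemma entropy_rule_not_A1:
  assumes "0 < \<eta>"
  shows "\<not> A1 (entropy_rule \<eta>)"
proof
  assume "A1 (entropy_rule \<eta>)"
  have adm: "admissible 2 [1, 1]"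
    by (simp add: admissible_def)
  moreover have "replicate 2 0 = [0, 0 :: real]"
    by (simp add: numeral_2_eq_2)
  ultimately have "entropy_rule \<eta> [1, 1] [0, 0] = 0"
    using \<open>A1 (entropy_rule \<eta>)\<close> unfolding A1_def by metis
  then have "entropy_strength \<eta> [1, 1] [0, 0] = q 0"
    using q_entropy_rule[of \<eta> 2 "[1, 1]" "[0, 0]"] assms adm by simp
  moreover have "entropy_strength \<eta> [1, 1] [0, 0] = 1 + \<eta> * ln 2"
    by (simp add: entropy_strength_def weight_def q_def numeral_2_eq_2 ln_div)
  ultimately show False
    using assms by (simp add: q_def)
qed

lemma entropy_rule_A3:
  assumes "0 \<le> \<eta>"
  shows "A3 (entropy_rule \<eta>)"
  \<comment> \<open>the term \<open>\<eta> * ln s\<close> absorbs the dependence of the weights \<open>lam ! k / s\<close> on the total weight \<open>s\<close>\<close>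
proof (rule A3I[where \<Phi> = "\<lambda>s c. s * (q c - \<eta> * ln s)"])
  show "c = c'" if "0 < s" "s * (q c - \<eta> * ln s) = s * (q c' - \<eta> * ln s)" for s c c'
    using that by (simp add: q_eq_iff)
  fix n lam and R :: "real list"
  assume adm: "admissible n lam" and len: "length R = n"
  define S where "S = sum_list lam"
  have S: "0 < S"
    using sum_list_pos[OF adm] by (simp add: S_def)
  have "S * entropy_strength \<eta> lam R = (\<Sum>k<n. lam ! k * (q (R ! k) - \<eta> * ln (lam ! k)) + \<eta> * ln S * lam ! k)"
    unfolding entropy_strength_def weight_def len S_def[symmetric] sum_distrib_left
    using S admissibleD(3)[OF adm] by (intro sum.cong) (simp_all add: ln_div field_simps)
  also have "\<dots> = (\<Sum>k<n. lam ! k * (q (R ! k) - \<eta> * ln (lam ! k))) + \<eta> * ln S * S"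
    by (simp add: sum.distrib sum_distrib_left[symmetric] S_def sum_list_admissible[OF adm])
  finally show "sum_list lam * (q (entropy_rule \<eta> lam R) - \<eta> * ln (sum_list lam))
      = (\<Sum>k<n. lam ! k * (q (R ! k) - \<eta> * ln (lam ! k)))"
    by (simp add: q_entropy_rule[OF assms adm len] S_def[symmetric] algebra_simps)
qed

lemma entropy_rule_partial_deriv:
  assumes "0 \<le> \<eta>" "admissible n lam" "length R = n" "i < n"
  shows "((\<lambda>t. entropy_rule \<eta> lam (R[i := t])) has_real_derivative
      weight lam i * q (R ! i) / entropy_strength \<eta> lam R) (at (R ! i))"
proof -
  define w where "w = weight lam i"
  define K where "K = (\<Sum>k\<in>{..<n} - {i}. weight lam k * (q (R ! k) - \<eta> * ln (weight lam k)))"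
  have strength: "entropy_strength \<eta> lam (R[i := t]) = w * (q t - \<eta> * ln w) + K" for t
    unfolding entropy_strength_def w_def K_def
    using sum_nth_list_update[of i R "\<lambda>k r. weight lam k * (q r - \<eta> * ln (weight lam k))"] assms(3,4)
    by simp
  define s where "s = entropy_strength \<eta> lam R"
  have s: "0 < s" "s = w * (q (R ! i) - \<eta> * ln w) + K"
    using entropy_strength_pos[OF assms(1-3)] strength[of "R ! i"] assms(3) by (simp_all add: s_def)
  have inner: "((\<lambda>t. w * (q t - \<eta> * ln w) + K) has_real_derivative w * (q (R ! i) * ln 10 / 400))
      (at (R ! i))"
    by (auto intro!: derivative_eq_intros DERIV_q)
  have outer: "(qinv has_real_derivative 400 / (ln 10 * s)) (at (w * (q (R ! i) - \<eta> * ln w) + K))"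
    using DERIV_qinv[OF s(1)] s(2) by simp
  have "((\<lambda>t. qinv (w * (q t - \<eta> * ln w) + K)) has_real_derivative
      400 / (ln 10 * s) * (w * (q (R ! i) * ln 10 / 400))) (at (R ! i))"
    by (rule DERIV_chain2[OF outer inner])
  moreover have "400 / (ln 10 * s) * (w * (q (R ! i) * ln 10 / 400)) = w * q (R ! i) / s"
    by simp
  ultimately show ?thesis
    by (simp add: entropy_rule_eq strength w_def s_def)
qed

lemma tendsto_entropy_strength:
  assumes "admissible n lam" "length R = n"
  shows "((\<lambda>x. entropy_strength \<eta> (fst x) (snd x)) \<longlongrightarrow> entropy_strength \<eta> lam R) (admissible_nhds n lam R)"
proof -
  have "((\<lambda>x. \<Sum>k<n. weight (fst x) k * (q (snd x ! k) - \<eta> * ln (weight (fst x) k)))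
      \<longlongrightarrow> entropy_strength \<eta> lam R) (admissible_nhds n lam R)"
    unfolding entropy_strength_def assms(2) using assms weight_pos[OF assms(1)]
    by (intro tendsto_intros tendsto_q tendsto_weight tendsto_nth_snd) (auto simp: less_imp_neq[symmetric])
  moreover have "eventually (\<lambda>x. (\<Sum>k<n. weight (fst x) k * (q (snd x ! k) - \<eta> * ln (weight (fst x) k)))
      = entropy_strength \<eta> (fst x) (snd x)) (admissible_nhds n lam R)"
    using eventually_admissible_nhds_admissible by eventually_elim (simp add: entropy_strength_def)
  ultimately show ?thesis
    by (rule Lim_transform_eventually)
qed

lemma entropy_rule_A2:
  assumes "0 \<le> \<eta>"
  shows "A2 (entropy_rule \<eta>)"
  unfolding A2_iff_A2_arity
proof
  fix n
  show "A2_arity n (entropy_rule \<eta>)"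
  proof (rule A2_arityI[where D = "\<lambda>lam R i. weight lam i * q (R ! i) / entropy_strength \<eta> lam R"])
    fix lam and R :: "real list"
    assume adm: "admissible n lam" and len: "length R = n"
    then show "((\<lambda>x. entropy_rule \<eta> (fst x) (snd x)) \<longlongrightarrow> entropy_rule \<eta> lam R) (admissible_nhds n lam R)"
      unfolding entropy_rule_eq
      by (intro tendsto_qinv tendsto_entropy_strength entropy_strength_pos[OF assms])
    fix i assume "i < n"
    with adm len show "0 < weight lam i * q (R ! i) / entropy_strength \<eta> lam R"
      by (simp add: weight_pos q_pos entropy_strength_pos[OF assms])
    from \<open>i < n\<close> adm len show "((\<lambda>x. weight (fst x) i * q (snd x ! i) / entropy_strength \<eta> (fst x) (snd x))
        \<longlongrightarrow> weight lam i * q (R ! i) / entropy_strength \<eta> lam R) (admissible_nhds n lam R)"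
      using entropy_strength_pos[OF assms adm len]
      by (intro tendsto_intros tendsto_q tendsto_weight tendsto_nth_snd tendsto_entropy_strength) auto
  qed (rule entropy_rule_partial_deriv[OF assms])
qed

lemma entropy_rule_A4:
  assumes "0 \<le> \<eta>"
  shows "A4 (entropy_rule \<eta>)"
  unfolding A4_def
proof (intro allI)
  fix x y :: real
  have adm: "admissible 2 [1, 1]"
    by (simp add: admissible_def)
  define s where "s = entropy_strength \<eta> [1, 1] [x, y]"
  have "0 < s"
    unfolding s_def by (rule entropy_strength_pos[OF assms adm]) simp
  have "((\<lambda>t. entropy_rule \<eta> [1, 1] [t, y]) has_real_derivative q x / 2 / s) (at x)"
    and "((\<lambda>t. entropy_rule \<eta> [1, 1] [x, t]) has_real_derivative q y / 2 / s) (at y)"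
    using entropy_rule_partial_deriv[OF assms adm, of "[x, y]" 0]
      entropy_rule_partial_deriv[OF assms adm, of "[x, y]" 1]
    by (simp_all add: s_def weight_def)
  moreover have "(q x / 2 / s) / (q y / 2 / s) = E x y / (1 - E x y)"
    using \<open>0 < s\<close> q_pos[of y] by (simp add: q_divide E_odds)
  ultimately show "\<exists>a b. ((\<lambda>t. entropy_rule \<eta> [1, 1] [t, y]) has_real_derivative a) (at x)
      \<and> ((\<lambda>s. entropy_rule \<eta> [1, 1] [x, s]) has_real_derivative b) (at y)
      \<and> a / b = E x y / (1 - E x y) \<and> E x y / (1 - E x y) = 10 powr ((x - y) / 400)"
    using E_odds by blast
qed

section \<open>The mixed rule\<close>

lemma mixed_rule_eq:
  "mixed_rule lam R = (if length R \<in> {1, 2} then entropy_rule 0 lam R else lin_rule lam R)"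
  by (simp add: mixed_rule_def entropy_rule_def lin_rule_def Let_def sum_divide_distrib)

lemma mixed_rule_A1: "A1 mixed_rule"
  using lin_rule_A1 entropy_rule_zero_A1 by (simp add: A1_def mixed_rule_eq)

lemma mixed_rule_A2: "A2 mixed_rule"
  unfolding A2_iff_A2_arity
proof
  fix n
  show "A2_arity n mixed_rule"
  proof (cases "n \<in> {1, 2}")
    case True
    then have "A2_arity n mixed_rule \<longleftrightarrow> A2_arity n (entropy_rule 0)"
      by (intro A2_arity_cong) (simp add: mixed_rule_eq)
    then show ?thesis
      using entropy_rule_A2[of 0] by (simp add: A2_iff_A2_arity)
  next
    case False
    then have "A2_arity n mixed_rule \<longleftrightarrow> A2_arity n lin_rule"
      by (intro A2_arity_cong) (simp add: mixed_rule_eq)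
    then show ?thesis
      using lin_rule_A2 by (simp add: A2_iff_A2_arity)
  qed
qed

lemma mixed_rule_A4: "A4 mixed_rule"
  using entropy_rule_A4[of 0] A4_cong[of mixed_rule "entropy_rule 0"] by (simp add: mixed_rule_eq)

lemma mixed_rule_not_A3: "\<not> A3 mixed_rule"
proof
  assume A3: "A3 mixed_rule"
  have "admissible 3 [1, 1, 1]"
    by (simp add: admissible_def)
  moreover have "ordered_partition 3 [[0, 1], [2]]"
    by (auto simp: ordered_partition_def)
  ultimately have "mixed_rule [1, 1, 1] [0, 0, 400] = mixed_rule [2, 1] [mixed_rule [1, 1] [0, 0], mixed_rule [1] [400]]"
    using A3[unfolded A3_def, rule_format, of 3 "[1, 1, 1]" "[0, 0, 400]"] by simp
  then have "400 / 3 = 400 * log 10 4"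
    by (simp add: mixed_rule_def q_def qinv_def)
  then have "log 10 (4 ^ 3) = 1"
    by (subst log_nat_power) auto
  then have "(10 :: real) powr log 10 64 = 10"
    by simp
  then show False
    by simp
qed

theorem proposition4:
  shows "(A1 lin_rule \<and> A2 lin_rule \<and> A3 lin_rule \<and> \<not> A4 lin_rule)
    \<and> (A1 mixed_rule \<and> A2 mixed_rule \<and> A4 mixed_rule \<and> \<not> A3 mixed_rule)
    \<and> (\<forall>\<eta>>0. A2 (entropy_rule \<eta>) \<and> A3 (entropy_rule \<eta>) \<and> A4 (entropy_rule \<eta>)
              \<and> \<not> A1 (entropy_rule \<eta>))"
  using lin_rule_A1 lin_rule_A2 lin_rule_A3 lin_rule_not_A4
    mixed_rule_A1 mixed_rule_A2 mixed_rule_A4 mixed_rule_not_A3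
    entropy_rule_A2 entropy_rule_A3 entropy_rule_A4 entropy_rule_not_A1
  by (auto simp: less_imp_le)

end
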